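(* Let $R$ be a ring with a nice topology. If $R$ is unit-regular, then $R$ is a full exchange ring.
   Context: $R$ is unit-regular if every $x\in R$ satisfies $x=xux$ for some unit $u$. A linear Hausdorff topology on $R$ is a ring topology with a basis $\mathfrak U$ of neighborhoods of $0$ consisting of left ideals, with $\bigcap_{U\in\mathfrak U}U=0$. A family $\{x_i\}_{i\in I}\subseteq R$ is summable to $r$ if for every $U\in\mathfrak U$ there is a finite $F'\subseteq I$ with $\sum_{i\in F}x_i-r\in U$ for all finite $F$ with $F'\subseteq F\subseteq I$ (write $\sum_{i\in I}x_i=r$; the family is then called summable). The topology is nice if it is linear, Hausdorff, and for every summable family $\{x_i\}_{i\in I}$ and every family $\{r_i\}_{i\in I}\subseteq R$ the family $\{r_ix_i\}_{i\in I}$ is summable. For a cardinal $\aleph$, $R$ is an $\aleph$-exchange ring if for every family $\{x_i\}_{i\in I}$ with $|I|\le\aleph$ summable to $1$ there exist pairwise orthogonal idempotents $e_i\in Rx_i$ forming a summable family with $\sum_{i\in I}e_i=1$; $R$ is a full exchange ring if it is an $\aleph$-exchange ring for every cardinal $\aleph$. *)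

theory Defs
  imports Main
begin

definition left_ideal :: "'a::ring_1 set \<Rightarrow> bool" where
  "left_ideal L \<longleftrightarrow> 0 \<in> L \<and> (\<forall>x\<in>L. \<forall>y\<in>L. x + y \<in> L)
     \<and> (\<forall>r x. x \<in> L \<longrightarrow> r * x \<in> L)"

text \<open>A family of left ideals forming a basis of neighbourhoods of 0 of a ring topology
  (directed downwards; right multiplication by a fixed element is continuous),
  with zero intersection (Hausdorff).\<close>
definition linear_hausdorff_topology :: "'a::ring_1 set set \<Rightarrow> bool" where
  "linear_hausdorff_topology \<U> \<longleftrightarrow>
     \<U> \<noteq> {} \<and> (\<forall>U\<in>\<U>. left_ideal U)
     \<and> (\<forall>U\<in>\<U>. \<forall>V\<in>\<U>. \<exists>W\<in>\<U>. W \<subseteq> U \<inter> V)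
     \<and> (\<forall>U\<in>\<U>. \<forall>r. \<exists>V\<in>\<U>. (\<lambda>v. v * r) ` V \<subseteq> U)
     \<and> \<Inter>\<U> = {0}"

definition has_sum_top :: "'a::ring_1 set set \<Rightarrow> ('i \<Rightarrow> 'a) \<Rightarrow> 'i set \<Rightarrow> 'a \<Rightarrow> bool" where
  "has_sum_top \<U> x I r \<longleftrightarrow>
     (\<forall>U\<in>\<U>. \<exists>F'. finite F' \<and> F' \<subseteq> I \<and>
        (\<forall>F. finite F \<and> F' \<subseteq> F \<and> F \<subseteq> I \<longrightarrow> sum x F - r \<in> U))"

definition summable_top :: "'a::ring_1 set set \<Rightarrow> ('i \<Rightarrow> 'a) \<Rightarrow> 'i set \<Rightarrow> bool" where
  "summable_top \<U> x I \<longleftrightarrow> (\<exists>r. has_sum_top \<U> x I r)"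

definition nice_topology :: "'i itself \<Rightarrow> 'a::ring_1 set set \<Rightarrow> bool" where
  "nice_topology _ \<U> \<longleftrightarrow> linear_hausdorff_topology \<U> \<and>
     (\<forall>(I::'i set) x r. summable_top \<U> x I \<longrightarrow> summable_top \<U> (\<lambda>i. r i * x i) I)"

definition is_unit :: "'a::ring_1 \<Rightarrow> bool" where
  "is_unit u \<longleftrightarrow> (\<exists>v. u * v = 1 \<and> v * u = 1)"

definition unit_regular :: "'a::ring_1 itself \<Rightarrow> bool" where
  "unit_regular _ \<longleftrightarrow> (\<forall>x::'a. \<exists>u. is_unit u \<and> x = x * u * x)"

definition exchange_for :: "'a::ring_1 set set \<Rightarrow> 'i set \<Rightarrow> bool" where
  "exchange_for \<U> I \<longleftrightarrow>
     (\<forall>x. has_sum_top \<U> x I 1 \<longrightarrow>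
        (\<exists>e. (\<forall>i\<in>I. e i * e i = e i \<and> (\<exists>r. e i = r * x i))
           \<and> (\<forall>i\<in>I. \<forall>j\<in>I. i \<noteq> j \<longrightarrow> e i * e j = 0)
           \<and> has_sum_top \<U> e I 1))"

text \<open>Full exchange ring (relative to index type 'i): aleph-exchange for every cardinal
  aleph realised by subsets of 'i. Since 'i is arbitrary, this covers every cardinal.\<close>
definition full_exchange :: "'i itself \<Rightarrow> 'a::ring_1 set set \<Rightarrow> bool" where
  "full_exchange _ \<U> \<longleftrightarrow> (\<forall>I::'i set. exchange_for \<U> I)"

end

theory Submission
  imports Defs
begin

text \<open>Well-order the index set and build orthogonal idempotents \<open>e k\<close> by transfinite
  recursion: with \<open>B k = \<Sum>j<k. e j\<close> (an idempotent) and \<open>a k = 1 - B k\<close>, take an inner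
  inverse \<open>w k\<close> of \<open>z k = a k * x k * a k\<close> inside the corner \<open>a k R a k\<close> and put
  \<open>e k = w k * z k\<close>. The elements \<open>f k = e k * w k * x k \<in> R x k\<close> satisfy
  \<open>f k * a k = e k\<close>, and niceness makes \<open>f\<close> summable over every initial segment, to \<open>s\<close>
  say, with \<open>e k * s = f k\<close>. Unit-regularity (a left regular element is a unit) then shows in turn that
  the partial sums \<open>B k\<close> exist, that \<open>\<Sum>k. e k = 1\<close>, and that \<open>s\<close> is a unit; the required
  idempotents are \<open>s\<inverse> * f k\<close>.\<close>

lemma exists_strict_well_order:
  obtains lt :: "'i rel"
  where "wf lt" "trans lt" "\<And>i j. i \<noteq> j \<Longrightarrow> (i, j) \<in> lt \<or> (j, i) \<in> lt"
proof -
  from well_ordering obtain r :: "'i rel" where r: "Well_order r" "Field r = UNIV"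
    by (elim exE conjE)
  then have "linear_order_on UNIV r" "wf (r - Id)"
    unfolding well_order_on_def by simp_all
  moreover from this(1) have "strict_linear_order_on UNIV (r - Id)"
    by (rule strict_linear_order_on_diff_Id)
  ultimately show thesis
    using that[of "r - Id"] unfolding strict_linear_order_on_def total_on_def by simp
qed

lemma left_ideal_diff:
  assumes "left_ideal L" and "a \<in> L" and "b \<in> L"
  shows "a - b \<in> L"
proof -
  have "a + (- 1) * b \<in> L"
    using assms unfolding left_ideal_def by blast
  then show ?thesis by simp
qed

lemma linear_hausdorff_topology_left_ideal:
  "linear_hausdorff_topology \<U> \<Longrightarrow> U \<in> \<U> \<Longrightarrow> left_ideal U"
  by (simp add: linear_hausdorff_topology_def)

lemma has_sum_topE:
  assumes "has_sum_top \<U> x I r" and "U \<in> \<U>"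
  obtains F' where "finite F'" "F' \<subseteq> I"
    "\<And>F. finite F \<Longrightarrow> F' \<subseteq> F \<Longrightarrow> F \<subseteq> I \<Longrightarrow> sum x F - r \<in> U"
  using assms unfolding has_sum_top_def by (meson that)

lemma has_sum_top_unique:
  assumes T: "linear_hausdorff_topology \<U>"
    and "has_sum_top \<U> x I r" and "has_sum_top \<U> x I r'"
  shows "r = r'"
proof -
  have "r' - r \<in> U" if U: "U \<in> \<U>" for U
  proof -
    obtain F1 where F1: "finite F1" "F1 \<subseteq> I"
      "\<And>F. finite F \<Longrightarrow> F1 \<subseteq> F \<Longrightarrow> F \<subseteq> I \<Longrightarrow> sum x F - r \<in> U"
      using has_sum_topE[OF assms(2) U] by blast
    obtain F2 where F2: "finite F2" "F2 \<subseteq> I"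
      "\<And>F. finite F \<Longrightarrow> F2 \<subseteq> F \<Longrightarrow> F \<subseteq> I \<Longrightarrow> sum x F - r' \<in> U"
      using has_sum_topE[OF assms(3) U] by blast
    have "sum x (F1 \<union> F2) - r \<in> U" "sum x (F1 \<union> F2) - r' \<in> U"
      using F1(1,2) F2(1,2) by (auto intro!: F1(3) F2(3))
    then have "(sum x (F1 \<union> F2) - r) - (sum x (F1 \<union> F2) - r') \<in> U"
      by (rule left_ideal_diff[OF linear_hausdorff_topology_left_ideal[OF T U]])
    then show ?thesis by simp
  qed
  then have "r' - r \<in> \<Inter>\<U>" by blast
  with T show ?thesis by (simp add: linear_hausdorff_topology_def)
qed

lemma has_sum_top_cong:
  assumes "\<And>i. i \<in> I \<Longrightarrow> x i = y i" and "has_sum_top \<U> x I r"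
  shows "has_sum_top \<U> y I r"
proof -
  have "sum x F = sum y F" if "F \<subseteq> I" for F
    using assms(1) that by (meson subsetD sum.cong)
  with assms(2) show ?thesis unfolding has_sum_top_def by metis
qed

lemma has_sum_top_mult_left:
  assumes T: "linear_hausdorff_topology \<U>" and "has_sum_top \<U> x I r"
  shows "has_sum_top \<U> (\<lambda>i. c * x i) I (c * r)"
  unfolding has_sum_top_def
proof
  fix U assume U: "U \<in> \<U>"
  obtain F' where F': "finite F'" "F' \<subseteq> I"
    "\<And>F. finite F \<Longrightarrow> F' \<subseteq> F \<Longrightarrow> F \<subseteq> I \<Longrightarrow> sum x F - r \<in> U"
    using has_sum_topE[OF assms(2) U] by blast
  have "c * (sum x F - r) \<in> U" if "finite F" "F' \<subseteq> F" "F \<subseteq> I" for F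
    using F'(3)[OF that] linear_hausdorff_topology_left_ideal[OF T U]
    by (simp add: left_ideal_def)
  with F'(1,2) show "\<exists>F'. finite F' \<and> F' \<subseteq> I \<and>
      (\<forall>F. finite F \<and> F' \<subseteq> F \<and> F \<subseteq> I \<longrightarrow> (\<Sum>i\<in>F. c * x i) - c * r \<in> U)"
    by (auto simp: sum_distrib_left right_diff_distrib)
qed

lemma has_sum_top_mult_right:
  assumes T: "linear_hausdorff_topology \<U>" and "has_sum_top \<U> x I r"
  shows "has_sum_top \<U> (\<lambda>i. x i * c) I (r * c)"
  unfolding has_sum_top_def
proof
  fix U assume "U \<in> \<U>"
  then obtain V where V: "V \<in> \<U>" "(\<lambda>v. v * c) ` V \<subseteq> U"
    using T unfolding linear_hausdorff_topology_def by meson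
  obtain F' where F': "finite F'" "F' \<subseteq> I"
    "\<And>F. finite F \<Longrightarrow> F' \<subseteq> F \<Longrightarrow> F \<subseteq> I \<Longrightarrow> sum x F - r \<in> V"
    using has_sum_topE[OF assms(2) V(1)] by blast
  have "(sum x F - r) * c \<in> U" if "finite F" "F' \<subseteq> F" "F \<subseteq> I" for F
    using F'(3)[OF that] V(2) by blast
  with F'(1,2) show "\<exists>F'. finite F' \<and> F' \<subseteq> I \<and>
      (\<forall>F. finite F \<and> F' \<subseteq> F \<and> F \<subseteq> I \<longrightarrow> (\<Sum>i\<in>F. x i * c) - r * c \<in> U)"
    by (auto simp: sum_distrib_right left_diff_distrib)
qed

lemma has_sum_top_zeroD:
  assumes T: "linear_hausdorff_topology \<U>" and "has_sum_top \<U> x I r"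
    and "\<And>i. i \<in> I \<Longrightarrow> x i = 0"
  shows "r = 0"
proof -
  have "has_sum_top \<U> x I 0"
    unfolding has_sum_top_def
  proof (intro ballI exI[of _ "{}"] conjI allI impI)
    fix U F assume "U \<in> \<U>" and "finite F \<and> {} \<subseteq> F \<and> F \<subseteq> I"
    with assms(3) show "sum x F - 0 \<in> U"
      using linear_hausdorff_topology_left_ideal[OF T]
      by (simp add: left_ideal_def subset_iff)
  qed auto
  with has_sum_top_unique[OF T assms(2)] show ?thesis .
qed

lemma has_sum_top_singleD:
  assumes T: "linear_hausdorff_topology \<U>" and "has_sum_top \<U> x I r"
    and "j \<in> I" and "\<And>i. i \<in> I \<Longrightarrow> i \<noteq> j \<Longrightarrow> x i = 0"
  shows "r = x j"
proof -
  have "has_sum_top \<U> x I (x j)"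
    unfolding has_sum_top_def
  proof (intro ballI exI[of _ "{j}"] conjI allI impI)
    fix U F assume U: "U \<in> \<U>" and F: "finite F \<and> {j} \<subseteq> F \<and> F \<subseteq> I"
    then have "sum x F = x j + sum x (F - {j})" by (simp add: sum.remove)
    also have "sum x (F - {j}) = 0" using F assms(4) by (intro sum.neutral) auto
    finally show "sum x F - x j \<in> U"
      using linear_hausdorff_topology_left_ideal[OF T U] by (simp add: left_ideal_def)
  qed (use assms(3) in auto)
  with has_sum_top_unique[OF T assms(2)] show ?thesis .
qed

lemma has_sum_top_restrict:
  assumes "has_sum_top \<U> x I r" and "P \<subseteq> I" and "\<And>i. i \<in> I \<Longrightarrow> i \<notin> P \<Longrightarrow> x i = 0"
  shows "has_sum_top \<U> x P r"
  unfolding has_sum_top_def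
proof
  fix U assume "U \<in> \<U>"
  then obtain F' where F': "finite F'" "F' \<subseteq> I"
    "\<And>F. finite F \<Longrightarrow> F' \<subseteq> F \<Longrightarrow> F \<subseteq> I \<Longrightarrow> sum x F - r \<in> U"
    using has_sum_topE[OF assms(1)] by blast
  have "sum x F - r \<in> U" if F: "finite F" "F' \<inter> P \<subseteq> F" "F \<subseteq> P" for F
  proof -
    have "\<forall>i\<in>F \<union> F' - F. x i = 0"
      using F F'(2) assms(3) by blast
    then have "sum x (F \<union> F') = sum x F"
      using F(1) F'(1) by (intro sum.mono_neutral_right) auto
    moreover have "sum x (F \<union> F') - r \<in> U"
      using F F' assms(2) by (intro F'(3)) auto
    ultimately show ?thesis by simp
  qed
  with F'(1) show "\<exists>F'. finite F' \<and> F' \<subseteq> P \<and>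
      (\<forall>F. finite F \<and> F' \<subseteq> F \<and> F \<subseteq> P \<longrightarrow> sum x F - r \<in> U)"
    by (intro exI[of _ "F' \<inter> P"]) auto
qed

lemma nice_topology_has_sum_mult:
  assumes N: "nice_topology TYPE('i) \<U>" and x: "has_sum_top \<U> (x :: 'i \<Rightarrow> 'a::ring_1) I r"
    and "P \<subseteq> I"
  obtains s where "has_sum_top \<U> (\<lambda>i. c i * x i) P s"
proof -
  let ?c = "\<lambda>i. if i \<in> P then c i else 0"
  have nice: "summable_top \<U> y I \<Longrightarrow> summable_top \<U> (\<lambda>i. d i * y i) I"
    for y :: "'i \<Rightarrow> 'a" and d
    using N unfolding nice_topology_def by blast
  have "summable_top \<U> x I"
    using x unfolding summable_top_def by blast
  then have "summable_top \<U> (\<lambda>i. ?c i * x i) I" by (rule nice)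
  then obtain s where "has_sum_top \<U> (\<lambda>i. ?c i * x i) I s"
    unfolding summable_top_def by blast
  then have "has_sum_top \<U> (\<lambda>i. ?c i * x i) P s"
    using \<open>P \<subseteq> I\<close> by (rule has_sum_top_restrict) simp
  then have "has_sum_top \<U> (\<lambda>i. c i * x i) P s"
    by (rule has_sum_top_cong[rotated]) simp
  then show thesis by (rule that)
qed

definition orthogonal_idempotents :: "('i \<Rightarrow> 'a::ring_1) \<Rightarrow> 'i set \<Rightarrow> bool" where
  "orthogonal_idempotents e P \<longleftrightarrow>
     (\<forall>i\<in>P. e i * e i = e i) \<and> (\<forall>i\<in>P. \<forall>j\<in>P. i \<noteq> j \<longrightarrow> e i * e j = 0)"

lemma orthogonal_idempotents_subset:
  "orthogonal_idempotents e P \<Longrightarrow> Q \<subseteq> P \<Longrightarrow> orthogonal_idempotents e Q"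
  unfolding orthogonal_idempotents_def by blast

definition inner_inverse :: "'a::ring_1 \<Rightarrow> 'a" where
  "inner_inverse z = (SOME w. z * w * z = z)"

lemma unit_regular_inner_inverse:
  assumes "unit_regular TYPE('a::ring_1)"
  shows "z * inner_inverse z * z = (z :: 'a)"
proof -
  obtain u where "z * u * z = z"
    using assms unfolding unit_regular_def by metis
  then show ?thesis
    unfolding inner_inverse_def by (rule someI)
qed

lemma unit_regular_invertible_if_left_regular:
  assumes "unit_regular TYPE('a::ring_1)" and left_regular: "\<And>r. (w :: 'a) * r = 0 \<Longrightarrow> r = 0"
  obtains v where "v * w = 1" and "w * v = 1"
proof -
  obtain u where "is_unit u" and wuw: "w = w * u * w"
    using assms(1) unfolding unit_regular_def by blast
  then obtain v where v: "u * v = 1" "v * u = 1"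
    unfolding is_unit_def by blast
  have "w * (u * w - 1) = 0"
    using wuw by (simp add: algebra_simps)
  then have uw: "u * w = 1"
    using left_regular by fastforce
  then have "w = v"
    by (metis mult.assoc mult_1_left mult_1_right v(2))
  with uw v show thesis
    by (intro that) simp_all
qed

lemma unit_regular_square_factor:
  assumes "unit_regular TYPE('a::ring_1)" and kernel: "\<And>r. (s :: 'a) * s * r = 0 \<Longrightarrow> s * r = 0"
  obtains y where "s = s * s * y"
proof -
  obtain u where sus: "s = s * u * s"
    using assms(1) unfolding unit_regular_def by blast
  \<comment> \<open>\<open>s + 1 - u s\<close> is left regular, hence a unit, and \<open>s (s + 1 - u s) = s * s\<close>.\<close>
  define w where "w = s + 1 - u * s"
  have "r = 0" if wr: "w * r = 0" for r
  proof -
    have r: "r = u * s * r - s * r"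
      using wr by (simp add: w_def algebra_simps eq_neg_iff_add_eq_0)
    have "s * (u * (s * r)) = s * r"
      using sus by (metis mult.assoc)
    then have "s * s * r = s * (s * r + r - u * s * r)"
      by (simp add: algebra_simps)
    also have "\<dots> = 0"
      using wr by (simp add: w_def algebra_simps)
    finally have "s * r = 0"
      by (rule kernel)
    with r show "r = 0"
      by (simp add: mult.assoc)
  qed
  then obtain v where v: "w * v = 1"
    using unit_regular_invertible_if_left_regular[OF assms(1)] by metis
  have "s = s * w * v"
    using v by (simp add: mult.assoc)
  also have "s * w = s * s"
    using sus by (simp add: w_def algebra_simps)
  finally show thesis
    by (rule that)
qed

lemma has_sum_top_orthogonal_idempotents:
  assumes T: "linear_hausdorff_topology \<U>" and sum: "has_sum_top \<U> e P b"
    and orth: "orthogonal_idempotents e P"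
  shows "\<And>j. j \<in> P \<Longrightarrow> e j * b = e j" and "\<And>j. j \<in> P \<Longrightarrow> b * e j = e j" and "b * b = b"
proof -
  show eb: "e j * b = e j" if j: "j \<in> P" for j
  proof -
    have "has_sum_top \<U> (\<lambda>i. e j * e i) P (e j * b)"
      by (rule has_sum_top_mult_left[OF T sum])
    then have "e j * b = e j * e j"
      by (rule has_sum_top_singleD[OF T _ j]) (use orth j in \<open>simp add: orthogonal_idempotents_def\<close>)
    with j orth show ?thesis
      unfolding orthogonal_idempotents_def by simp
  qed
  show "b * e j = e j" if j: "j \<in> P" for j
  proof -
    have "has_sum_top \<U> (\<lambda>i. e i * e j) P (b * e j)"
      by (rule has_sum_top_mult_right[OF T sum])
    then have "b * e j = e j * e j"
      by (rule has_sum_top_singleD[OF T _ j]) (use orth j in \<open>simp add: orthogonal_idempotents_def\<close>)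
    with j orth show ?thesis
      unfolding orthogonal_idempotents_def by simp
  qed
  have "has_sum_top \<U> (\<lambda>i. e i * b) P (b * b)"
    by (rule has_sum_top_mult_right[OF T sum])
  then have "has_sum_top \<U> e P (b * b)"
    by (rule has_sum_top_cong[rotated]) (simp add: eb)
  then show "b * b = b"
    using has_sum_top_unique[OF T _ sum] by blast
qed

lemma corner_idempotent:
  fixes a x w0 :: "'a::ring_1"
  assumes "a * a = a" and z: "z = a * x * a" and "z * w0 * z = z" and w: "w = a * w0 * a"
    and e: "e = w * z" and f: "f = e * w * x"
  shows "e * e = e" and "e * f = f" and "f * a = e" and "z * e = z"
    and "a * c = 0 \<Longrightarrow> e * c = 0" and "c * a = 0 \<Longrightarrow> c * e = 0"
proof -
  have aw: "a * w = w" "w * a = w" and za: "z * a = z" "a * z = z"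
    using assms(1) by (simp_all add: w z mult.assoc flip: mult.assoc[of a a])
  have zwz: "z * w * z = z"
    using assms(3) za by (simp add: w mult.assoc flip: mult.assoc[of z a])
  then show ee: "e * e = e"
    by (simp add: e mult.assoc)
  then show "e * f = f"
    by (simp add: f flip: mult.assoc)
  have "w * z = (w * a) * x * a"
    by (simp add: z mult.assoc)
  with aw(2) have "w * x * a = w * z"
    by simp
  then show "f * a = e"
    using ee by (simp add: f e mult.assoc)
  show "z * e = z"
    using zwz by (simp add: e mult.assoc)
  show "e * c = 0" if "a * c = 0"
    using that by (simp add: e z mult.assoc)
  show "c * e = 0" if "c * a = 0"
    using that by (simp add: e w flip: mult.assoc)
qed

lemma orthogonal_idempotents_mult_has_sum:
  assumes T: "linear_hausdorff_topology \<U>" and sum: "has_sum_top \<U> f P s"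
    and orth: "orthogonal_idempotents e P" and ef: "\<And>i. i \<in> P \<Longrightarrow> e i * f i = f i"
    and j: "j \<in> P"
  shows "e j * s = f j"
proof -
  have "has_sum_top \<U> (\<lambda>i. e j * f i) P (e j * s)"
    by (rule has_sum_top_mult_left[OF T sum])
  then have "e j * s = e j * f j"
  proof (rule has_sum_top_singleD[OF T _ j])
    fix i assume i: "i \<in> P" "i \<noteq> j"
    have "e j * f i = e j * e i * f i"
      using ef[OF i(1)] by (simp add: mult.assoc)
    also have "\<dots> = 0"
      using orth i j unfolding orthogonal_idempotents_def by simp
    finally show "e j * f i = 0" .
  qed
  with ef[OF j] show ?thesis
    by simp
qed

lemma wf_annihilator_transfer:
  assumes T: "linear_hausdorff_topology \<U>" and W: "wf lt"
    and Q: "\<And>j. j \<in> P \<Longrightarrow> Q j \<subseteq> {i \<in> P. (i, j) \<in> lt}"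
    and B: "\<And>j. j \<in> P \<Longrightarrow> has_sum_top \<U> e (Q j) (B j)"
    and fe: "\<And>j. j \<in> P \<Longrightarrow> f j * (1 - B j) = e j"
    and ft: "\<And>j. j \<in> P \<Longrightarrow> f j * t = 0"
    and "j \<in> P"
  shows "e j * t = 0"
  using \<open>j \<in> P\<close>
proof (induction j rule: wf_induct_rule[OF W])
  case (1 j)
  have "has_sum_top \<U> (\<lambda>i. e i * t) (Q j) (B j * t)"
    by (rule has_sum_top_mult_right[OF T B[OF 1(2)]])
  then have Bt: "B j * t = 0"
    by (rule has_sum_top_zeroD[OF T]) (use 1 Q in blast)
  have "e j * t = f j * (1 - B j) * t"
    using fe[OF 1(2)] by simp
  also have "\<dots> = f j * t - f j * (B j * t)"
    by (simp add: algebra_simps)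
  finally show ?case
    using Bt ft[OF 1(2)] by simp
qed

text \<open>Since \<open>e j * s = f j\<close>, the transfer lemma shows that \<open>s\<close> and \<open>s * s\<close> have the
  same right annihilator; unit-regularity then gives \<open>s = s * s * y\<close>, and \<open>e j = f j * y\<close>.\<close>
lemma triangular_family_summable:
  assumes UR: "unit_regular TYPE('a::ring_1)"
    and T: "linear_hausdorff_topology \<U>" and W: "wf lt"
    and Q: "\<And>j. j \<in> P \<Longrightarrow> Q j \<subseteq> {i \<in> P. (i, j) \<in> lt}"
    and B: "\<And>j. j \<in> P \<Longrightarrow> has_sum_top \<U> e (Q j) (B j)"
    and fe: "\<And>j. j \<in> P \<Longrightarrow> f j * (1 - B j) = (e j :: 'a)"
    and ef: "\<And>j. j \<in> P \<Longrightarrow> e j * f j = f j"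
    and orth: "orthogonal_idempotents e P"
    and sum: "has_sum_top \<U> f P s"
  obtains b where "has_sum_top \<U> e P b"
proof -
  have es: "e j * s = f j" if "j \<in> P" for j
    using orthogonal_idempotents_mult_has_sum[OF T sum orth ef that] .
  note transfer = wf_annihilator_transfer[OF T W Q B fe]
  have "s * r = 0" if ssr: "s * s * r = 0" for r
  proof -
    have "f j * (s * r) = 0" if "j \<in> P" for j
      using es[OF that] ssr by (metis mult.assoc mult_zero_right)
    then have "e j * (s * r) = 0" if "j \<in> P" for j
      using transfer that by blast
    moreover have "f j * r = e j * (s * r)" if "j \<in> P" for j
      using es[OF that] by (metis mult.assoc)
    ultimately have "f j * r = 0" if "j \<in> P" for j
      using that by simp
    moreover have "has_sum_top \<U> (\<lambda>j. f j * r) P (s * r)"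
      by (rule has_sum_top_mult_right[OF T sum])
    ultimately show "s * r = 0"
      using has_sum_top_zeroD[OF T] by blast
  qed
  then obtain y where y: "s = s * s * y"
    by (rule unit_regular_square_factor[OF UR])
  have "f j * (1 - s * y) = 0" if "j \<in> P" for j
  proof -
    have "f j * (1 - s * y) = e j * (s - s * s * y)"
      using es[OF that] by (simp add: algebra_simps flip: mult.assoc)
    with y show ?thesis
      by simp
  qed
  then have "e j * (1 - s * y) = 0" if "j \<in> P" for j
    using transfer that by blast
  then have "e j * s * y = e j" if "j \<in> P" for j
    using that by (simp add: algebra_simps)
  then have "f j * y = e j" if "j \<in> P" for j
    using es[OF that] that by metis
  moreover have "has_sum_top \<U> (\<lambda>j. f j * y) P (s * y)"
    by (rule has_sum_top_mult_right[OF T sum])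
  ultimately have "has_sum_top \<U> e P (s * y)"
    by (rule has_sum_top_cong)
  then show thesis
    by (rule that)
qed

locale exchange_construction =
  fixes \<U> :: "'a::ring_1 set set" and I :: "'i set" and x :: "'i \<Rightarrow> 'a" and lt :: "'i rel"
  assumes nice: "nice_topology TYPE('i) \<U>"
    and unit_regular: "unit_regular TYPE('a)"
    and has_sum_x: "has_sum_top \<U> x I 1"
    and wf: "wf lt" and trans: "trans lt"
    and total: "\<And>i j. i \<noteq> j \<Longrightarrow> (i, j) \<in> lt \<or> (j, i) \<in> lt"
begin

lemma topology: "linear_hausdorff_topology \<U>"
  using nice by (simp add: nice_topology_def)

definition below :: "'i \<Rightarrow> 'i set" where
  "below k = {j \<in> I. (j, k) \<in> lt}"

lemma below_trans: "j \<in> below k \<Longrightarrow> below j \<subseteq> below k"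
  using trans unfolding below_def by (auto dest: transD)

definition e_step :: "('i \<Rightarrow> 'a) \<Rightarrow> 'i \<Rightarrow> 'a" where
  "e_step g k = (let a = 1 - (THE b. has_sum_top \<U> g (below k) b); z = a * x k * a
               in a * inner_inverse z * a * z)"

definition e :: "'i \<Rightarrow> 'a" where
  "e = wfrec lt e_step"

text \<open>Until \<open>below_invariant\<close> shows that these sums exist, \<open>THE\<close> may denote junk.\<close>
definition B :: "'i \<Rightarrow> 'a" where
  "B k = (THE b. has_sum_top \<U> e (below k) b)"

definition a :: "'i \<Rightarrow> 'a" where
  "a k = 1 - B k"

definition z :: "'i \<Rightarrow> 'a" where
  "z k = a k * x k * a k"

definition w :: "'i \<Rightarrow> 'a" where
  "w k = a k * inner_inverse (z k) * a k"

definition f :: "'i \<Rightarrow> 'a" where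
  "f k = e k * w k * x k"

lemma e_unfold: "e k = w k * z k"
proof -
  have "has_sum_top \<U> (cut e lt k) (below k) = has_sum_top \<U> e (below k)"
    by (intro ext iffI; erule has_sum_top_cong[rotated]) (simp_all add: below_def cut_apply)
  then have "e k = e_step e k"
    unfolding e_def by (subst wfrec[OF wf]) (simp add: e_step_def)
  then show ?thesis
    by (simp add: e_step_def Let_def B_def a_def z_def w_def)
qed

lemma B_eqI: "has_sum_top \<U> e (below k) b \<Longrightarrow> B k = b"
  unfolding B_def using has_sum_top_unique[OF topology] by blast

lemma orthogonal_idempotents_insert:
  assumes sum: "has_sum_top \<U> e (below k) (B k)" and orth: "orthogonal_idempotents e (below k)"
  shows "orthogonal_idempotents e (insert k (below k))"
    and "e k * f k = f k" and "f k * a k = e k" and "z k * e k = z k"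
proof -
  note sum_props = has_sum_top_orthogonal_idempotents[OF topology sum orth]
  have "a k * a k = a k"
    using sum_props(3) by (simp add: a_def algebra_simps)
  note corner = corner_idempotent[OF this z_def unit_regular_inner_inverse[OF unit_regular]
      w_def e_unfold f_def]
  have "e k * e j = 0" "e j * e k = 0" if "j \<in> below k" for j
    using sum_props(1,2)[OF that] by (auto simp: a_def algebra_simps intro!: corner(5,6))
  with orth corner(1) show "orthogonal_idempotents e (insert k (below k))"
    unfolding orthogonal_idempotents_def by auto
  show "e k * f k = f k" "f k * a k = e k" "z k * e k = z k"
    by (fact corner(2-4))+
qed

lemma orthogonal_idempotents_downward:
  assumes "S \<subseteq> I" and "\<And>j. j \<in> S \<Longrightarrow> orthogonal_idempotents e (insert j (below j))"
  shows "orthogonal_idempotents e S"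
proof -
  have "e i * e j = 0" if "i \<in> S" "j \<in> S" "i \<noteq> j" for i j
  proof (cases "(i, j) \<in> lt")
    case True
    with that assms(1) have "i \<in> below j"
      by (auto simp: below_def)
    with assms(2)[OF that(2)] that(3) show ?thesis
      unfolding orthogonal_idempotents_def by blast
  next
    case False
    with total that assms(1) have "j \<in> below i"
      by (auto simp: below_def)
    with assms(2)[OF that(1)] that(3) show ?thesis
      unfolding orthogonal_idempotents_def by blast
  qed
  with assms(2) show ?thesis
    unfolding orthogonal_idempotents_def by blast
qed

lemma has_sum_f:
  assumes "P \<subseteq> I"
  obtains s where "has_sum_top \<U> f P s"
  using nice_topology_has_sum_mult[OF nice has_sum_x assms, of "\<lambda>k. e k * w k"]
  unfolding f_def by blast

lemma below_invariant:
  "k \<in> I \<Longrightarrow> has_sum_top \<U> e (below k) (B k) \<and> orthogonal_idempotents e (insert k (below k))"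
proof (induction k rule: wf_induct_rule[OF wf])
  case (1 k)
  have IH: "has_sum_top \<U> e (below j) (B j)" "orthogonal_idempotents e (insert j (below j))"
    if "j \<in> below k" for j
    using 1 that unfolding below_def by blast+
  have below_k: "below k \<subseteq> I"
    by (auto simp: below_def)
  have orth: "orthogonal_idempotents e (below k)"
    using below_k IH(2) by (rule orthogonal_idempotents_downward)
  obtain s where sum: "has_sum_top \<U> f (below k) s"
    using below_k by (rule has_sum_f)
  have "\<exists>b. has_sum_top \<U> e (below k) b"
  proof (rule triangular_family_summable[OF unit_regular topology wf _ IH(1) _ _ orth sum])
    fix j assume j: "j \<in> below k"
    show "below j \<subseteq> {i \<in> below k. (i, j) \<in> lt}"
      using below_trans[OF j] by (auto simp: below_def)
    have "orthogonal_idempotents e (below j)"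
      using IH(2)[OF j] by (rule orthogonal_idempotents_subset) blast
    note j_props = orthogonal_idempotents_insert[OF IH(1)[OF j] this]
    show "f j * (1 - B j) = e j"
      using j_props(3) by (simp add: a_def)
    show "e j * f j = f j"
      by (rule j_props(2))
  qed blast+
  then have "has_sum_top \<U> e (below k) (B k)"
    using B_eqI by blast
  with orth show ?case
    using orthogonal_idempotents_insert(1) by blast
qed

lemma has_sum_below: "k \<in> I \<Longrightarrow> has_sum_top \<U> e (below k) (B k)"
  using below_invariant by blast

lemma orthogonal_idempotents_e: "orthogonal_idempotents e I"
  using below_invariant by (blast intro: orthogonal_idempotents_downward)

lemma corner_relations:
  assumes "k \<in> I"
  shows "e k * f k = f k" and "f k * (1 - B k) = e k" and "z k * e k = z k"
proof -
  have "orthogonal_idempotents e (below k)"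
    using orthogonal_idempotents_e by (rule orthogonal_idempotents_subset) (auto simp: below_def)
  note props = orthogonal_idempotents_insert[OF has_sum_below[OF assms] this]
  show "e k * f k = f k" "f k * (1 - B k) = e k" "z k * e k = z k"
    using props(2-4) by (simp_all add: a_def)
qed

lemma e_annihilator_transfer: "(\<And>j. j \<in> I \<Longrightarrow> f j * t = 0) \<Longrightarrow> j \<in> I \<Longrightarrow> e j * t = 0"
  by (rule wf_annihilator_transfer[OF topology wf _ has_sum_below corner_relations(2)])
    (auto simp: below_def)

text \<open>The idempotent \<open>c = 1 - b\<close> is orthogonal to every \<open>e m\<close>, hence absorbs \<open>a m\<close> and
  annihilates \<open>z m = z m * e m\<close>; so \<open>c = c * (\<Sum>m. x m) * c = \<Sum>m. c * z m * c = 0\<close>.\<close>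
lemma has_sum_e_one: "has_sum_top \<U> e I 1"
proof -
  obtain s where sum_f: "has_sum_top \<U> f I s"
    using has_sum_f by blast
  obtain b where sum: "has_sum_top \<U> e I b"
    by (rule triangular_family_summable[OF unit_regular topology wf _ has_sum_below corner_relations(2,1)
          orthogonal_idempotents_e sum_f]) (auto simp: below_def)
  note sum_props = has_sum_top_orthogonal_idempotents[OF topology sum orthogonal_idempotents_e]
  define c where "c = 1 - b"
  have cc: "c * c = c"
    using sum_props(3) by (simp add: c_def algebra_simps)
  have ce: "c * e j = 0" "e j * c = 0" if "j \<in> I" for j
    using sum_props(1,2)[OF that] by (simp_all add: c_def algebra_simps)
  have "c * x m * c = 0" if m: "m \<in> I" for m
  proof -
    have "has_sum_top \<U> (\<lambda>i. c * e i) (below m) (c * B m)"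
      by (rule has_sum_top_mult_left[OF topology has_sum_below[OF m]])
    then have "c * B m = 0"
      by (rule has_sum_top_zeroD[OF topology]) (simp add: ce below_def)
    moreover have "has_sum_top \<U> (\<lambda>i. e i * c) (below m) (B m * c)"
      by (rule has_sum_top_mult_right[OF topology has_sum_below[OF m]])
    then have "B m * c = 0"
      by (rule has_sum_top_zeroD[OF topology]) (simp add: ce below_def)
    ultimately have "c * a m = c" "a m * c = c"
      by (simp_all add: a_def algebra_simps)
    then have "c * x m * c = c * z m * c"
      by (simp add: z_def mult.assoc flip: mult.assoc[of c "a m"])
    also have "\<dots> = c * z m * (e m * c)"
      using corner_relations(3)[OF m] by (simp add: mult.assoc flip: mult.assoc[of "z m"])
    finally show ?thesis
      using ce[OF m] by simp
  qed
  moreover have "has_sum_top \<U> (\<lambda>m. c * x m * c) I (c * 1 * c)"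
    by (rule has_sum_top_mult_right[OF topology has_sum_top_mult_left[OF topology has_sum_x]])
  ultimately have "c * 1 * c = 0"
    using has_sum_top_zeroD[OF topology] by blast
  with cc show ?thesis
    using sum by (simp add: c_def)
qed

lemma e_mult_sum_f: "has_sum_top \<U> f I s \<Longrightarrow> j \<in> I \<Longrightarrow> e j * s = f j"
  by (rule orthogonal_idempotents_mult_has_sum[OF topology _ orthogonal_idempotents_e corner_relations(1)])

lemma has_sum_f_invertible:
  assumes sum_f: "has_sum_top \<U> f I s"
  obtains v where "v * s = 1" and "s * v = 1"
proof (rule unit_regular_invertible_if_left_regular[OF unit_regular])
  fix r assume sr: "s * r = 0"
  have "f j * r = 0" if "j \<in> I" for j
    using e_mult_sum_f[OF sum_f that] sr by (metis mult.assoc mult_zero_right)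
  then have "e j * r = 0" if "j \<in> I" for j
    using e_annihilator_transfer that by blast
  moreover have "has_sum_top \<U> (\<lambda>j. e j * r) I (1 * r)"
    by (rule has_sum_top_mult_right[OF topology has_sum_e_one])
  ultimately show "r = 0"
    using has_sum_top_zeroD[OF topology] by fastforce
qed

lemma e_mult_f:
  assumes "i \<in> I" and "j \<in> I"
  shows "e i * f j = (if i = j then f j else 0)"
proof -
  have "e i * f j = e i * e j * f j"
    using corner_relations(1)[OF assms(2)] by (simp add: mult.assoc)
  with corner_relations(1)[OF assms(2)] orthogonal_idempotents_e assms show ?thesis
    unfolding orthogonal_idempotents_def by auto
qed

theorem exchange_idempotents:
  "\<exists>e. (\<forall>i\<in>I. e i * e i = e i \<and> (\<exists>r. e i = r * x i))
     \<and> (\<forall>i\<in>I. \<forall>j\<in>I. i \<noteq> j \<longrightarrow> e i * e j = 0) \<and> has_sum_top \<U> e I 1"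
proof -
  obtain s where sum_f: "has_sum_top \<U> f I s"
    using has_sum_f by blast
  obtain v where v: "v * s = 1" "s * v = 1"
    using has_sum_f_invertible[OF sum_f] by blast
  have "f i * v = e i" if "i \<in> I" for i
    using e_mult_sum_f[OF sum_f that] v(2) by (metis mult.assoc mult.right_neutral)
  then have "v * f i * (v * f j) = (if i = j then v * f j else 0)" if "i \<in> I" "j \<in> I" for i j
    using e_mult_f[OF that] that by (simp add: mult.assoc flip: mult.assoc[of "f i"])
  moreover have "v * f i = (v * e i * w i) * x i" for i
    by (simp add: f_def mult.assoc)
  moreover have "has_sum_top \<U> (\<lambda>j. v * f j) I 1"
    using has_sum_top_mult_left[OF topology sum_f, of v] v(1) by simp
  ultimately show ?thesis
    by (intro exI[of _ "\<lambda>j. v * f j"]) auto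
qed

end

theorem corollary4:
  fixes \<U> :: "'a::ring_1 set set"
  assumes "nice_topology TYPE('i) \<U>"
    and "unit_regular TYPE('a)"
  shows "full_exchange TYPE('i) \<U>"
  unfolding full_exchange_def exchange_for_def
proof (intro allI impI)
  fix I :: "'i set" and x :: "'i \<Rightarrow> 'a"
  assume "has_sum_top \<U> x I 1"
  obtain lt :: "'i rel" where "wf lt" "trans lt" "\<And>i j. i \<noteq> j \<Longrightarrow> (i, j) \<in> lt \<or> (j, i) \<in> lt"
    using exists_strict_well_order by blast
  with assms \<open>has_sum_top \<U> x I 1\<close> interpret exchange_construction \<U> I x lt
    by unfold_locales
  show "\<exists>e. (\<forall>i\<in>I. e i * e i = e i \<and> (\<exists>r. e i = r * x i))
      \<and> (\<forall>i\<in>I. \<forall>j\<in>I. i \<noteq> j \<longrightarrow> e i * e j = 0) \<and> has_sum_top \<U> e I 1"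
    by (rule exchange_idempotents)
qed

end
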